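(* Every representation of the relation algebra $31_{65}$ has at least $15$ vertices.
   Context: A cycle type is the multiset of colors of the sides of a triangle, e.g. $caa$ = one side $c$, two sides $a$. $31_{65}$ is the finite symmetric integral relation algebra with atoms $1',a,b,c$ whose mandatory diversity cycle types are exactly $aaa, bbb, ccc, abb, baa, caa, abc$ (so $acc, bcc, cbb$ are forbidden). A representation on a set $X$ (its vertices) is a coloring of all 2-element subsets of $X$ by $a,b,c$, each color used, such that: for every mandatory type $\{h,i,j\}$, every edge $\{x,y\}$ colored $h$ (for each choice of $h$ among the type's colors) and each ordering $(i,j)$ of the remaining two colors, some $z$ has $\{x,z\}$ colored $i$, $\{z,y\}$ colored $j$; and no triangle of a forbidden type occurs. *)

theory Defs
  imports Main "HOL-Library.Multiset"
begin

datatype color = A | B | C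

definition mandatory :: "color multiset set" where
  "mandatory = {{#A,A,A#}, {#B,B,B#}, {#C,C,C#}, {#A,B,B#}, {#B,A,A#}, {#C,A,A#}, {#A,B,C#}}"

definition forbidden :: "color multiset set" where
  "forbidden = {{#A,C,C#}, {#B,C,C#}, {#C,B,B#}}"

text \<open>A representation on vertex set X: col assigns a color to each 2-element subset
  (modelled as a symmetric function on pairs of distinct vertices of X).\<close>
definition is_rep_31_65 :: "'a set \<Rightarrow> ('a \<Rightarrow> 'a \<Rightarrow> color) \<Rightarrow> bool" where
  "is_rep_31_65 X col \<longleftrightarrow>
     (\<forall>x\<in>X. \<forall>y\<in>X. x \<noteq> y \<longrightarrow> col x y = col y x)
   \<and> (\<forall>h. \<exists>x\<in>X. \<exists>y\<in>X. x \<noteq> y \<and> col x y = h)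
   \<and> (\<forall>x\<in>X. \<forall>y\<in>X. x \<noteq> y \<longrightarrow> (\<forall>i j. {#col x y, i, j#} \<in> mandatory \<longrightarrow>
        (\<exists>z\<in>X. z \<noteq> x \<and> z \<noteq> y \<and> col x z = i \<and> col z y = j)))
   \<and> (\<forall>x\<in>X. \<forall>y\<in>X. \<forall>z\<in>X. x \<noteq> y \<and> y \<noteq> z \<and> x \<noteq> z \<longrightarrow>
        {#col x y, col y z, col x z#} \<notin> forbidden)"

end

theory Submission
  imports Defs
begin

(* Since acc and bcc are forbidden, "equal or joined by a c-edge" is an equivalence relation on
   the vertices.  Each class has at least three elements: by the types caa, abc and ccc every edge
   xy is accompanied by a c-edge xz, so x has a c-neighbour, and then a second one.  Since cbb is forbidden, the b-neighbours of a vertex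
   lie in pairwise different classes, and the types bbb and abb produce a vertex with four
   b-neighbours.  Hence there are at least five classes, i.e. at least 15 vertices. *)

locale rep_31_65 =
  fixes X :: "'a set" and col :: "'a \<Rightarrow> 'a \<Rightarrow> color"
  assumes rep: "is_rep_31_65 X col"
begin

lemma col_sym: "x \<in> X \<Longrightarrow> y \<in> X \<Longrightarrow> x \<noteq> y \<Longrightarrow> col x y = col y x"
  using rep unfolding is_rep_31_65_def by blast

lemma B_edge_exists: "\<exists>x\<in>X. \<exists>y\<in>X. x \<noteq> y \<and> col x y = B"
  using rep unfolding is_rep_31_65_def by blast

lemma mandatory_witness:
  "x \<in> X \<Longrightarrow> y \<in> X \<Longrightarrow> x \<noteq> y \<Longrightarrow> {#col x y, i, j#} \<in> mandatory \<Longrightarrow>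
   \<exists>z\<in>X. z \<noteq> x \<and> z \<noteq> y \<and> col x z = i \<and> col z y = j"
  using rep unfolding is_rep_31_65_def by blast

lemma not_forbidden:
  "x \<in> X \<Longrightarrow> y \<in> X \<Longrightarrow> z \<in> X \<Longrightarrow> x \<noteq> y \<Longrightarrow> y \<noteq> z \<Longrightarrow> x \<noteq> z \<Longrightarrow>
   {#col x y, col y z, col x z#} \<notin> forbidden"
  using rep unfolding is_rep_31_65_def by blast

lemma C_trans:
  assumes "x \<in> X" "y \<in> X" "z \<in> X" "x \<noteq> y" "y \<noteq> z" "x \<noteq> z"
    and "col x y = C" "col y z = C"
  shows "col x z = C"
  using not_forbidden[OF assms(1-6)] assms(7,8)
  by (cases "col x z") (auto simp: forbidden_def add_mset_commute)

lemma B_B_not_C: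
  assumes "x \<in> X" "y \<in> X" "z \<in> X" "x \<noteq> y" "y \<noteq> z" "x \<noteq> z"
    and "col x y = B" "col x z = B"
  shows "col y z \<noteq> C"
  using not_forbidden[OF assms(1-6)] assms(7,8) by (auto simp: forbidden_def add_mset_commute)

lemma C_edge_at:
  assumes "x \<in> X" "y \<in> X" "x \<noteq> y"
  shows "\<exists>z\<in>X. z \<noteq> x \<and> z \<noteq> y \<and> col x z = C"
proof -
  have "\<exists>j. {#col x y, C, j#} \<in> mandatory"
    by (cases "col x y") (auto simp: mandatory_def add_mset_commute)
  then show ?thesis using mandatory_witness[OF assms] by blast
qed

lemma B_edge_extension:
  assumes "x \<in> X" "y \<in> X" "x \<noteq> y" "col x y = B" "c \<noteq> C"
  shows "\<exists>z\<in>X. z \<noteq> x \<and> z \<noteq> y \<and> col x z = B \<and> col z y = c"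
proof -
  have "{#col x y, B, c#} \<in> mandatory"
    using assms by (cases c) (auto simp: mandatory_def add_mset_commute)
  then show ?thesis using mandatory_witness assms(1-3) by blast
qed

definition C_class :: "'a \<Rightarrow> 'a set" where
  "C_class x = insert x {y \<in> X. y \<noteq> x \<and> col x y = C}"

lemma C_class_subset: "x \<in> X \<Longrightarrow> C_class x \<subseteq> X"
  unfolding C_class_def by auto

lemma card_C_class:
  assumes "finite X" "x \<in> X"
  shows "3 \<le> card (C_class x)"
proof -
  obtain x0 y0 where "x0 \<in> X" "y0 \<in> X" "x0 \<noteq> y0"
    using B_edge_exists by blast
  then obtain y where "y \<in> X" "y \<noteq> x" by metis
  then obtain q where q: "q \<in> X" "q \<noteq> x" "col x q = C"
    using C_edge_at[OF assms(2)] by metis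
  then obtain r where r: "r \<in> X" "r \<noteq> x" "r \<noteq> q" "col x r = C"
    using C_edge_at[OF assms(2)] by metis
  have "{x, q, r} \<subseteq> C_class x"
    using q r unfolding C_class_def by auto
  moreover have "finite (C_class x)"
    using C_class_subset[OF assms(2)] assms(1) finite_subset by blast
  ultimately have "card {x, q, r} \<le> card (C_class x)"
    by (rule card_mono[rotated])
  then show ?thesis using q r by simp
qed

lemma C_classes_disjoint:
  assumes "p \<in> X" "q \<in> X" "p \<noteq> q" "col p q \<noteq> C"
  shows "C_class p \<inter> C_class q = {}"
proof (rule ccontr)
  assume "C_class p \<inter> C_class q \<noteq> {}"
  then obtain y where y: "y \<in> C_class p" "y \<in> C_class q" by blast
  have "col p q = C"
  proof (cases "y = p \<or> y = q")
    case True
    then show ?thesis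
      using y assms col_sym[OF assms(1-3)] unfolding C_class_def by auto
  next
    case False
    then have "y \<in> X" "col p y = C" "col y q = C"
      using y col_sym[OF assms(2), of y] unfolding C_class_def by auto
    then show ?thesis using C_trans assms(1-3) False by metis
  qed
  with assms(4) show False ..
qed

lemma card_ge_3_times_C_free:
  assumes "finite X" "S \<subseteq> X"
    and C_free: "\<And>p q. p \<in> S \<Longrightarrow> q \<in> S \<Longrightarrow> p \<noteq> q \<Longrightarrow> col p q \<noteq> C"
  shows "3 * card S \<le> card X"
proof -
  have fin: "finite S" "\<And>p. p \<in> S \<Longrightarrow> finite (C_class p)"
    using assms(1,2) C_class_subset finite_subset by blast+
  have disj: "\<And>p q. p \<in> S \<Longrightarrow> q \<in> S \<Longrightarrow> p \<noteq> q \<Longrightarrow> C_class p \<inter> C_class q = {}"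
    using C_classes_disjoint C_free assms(2) by blast
  have "3 * card S = (\<Sum>p\<in>S. 3)" by simp
  also have "\<dots> \<le> (\<Sum>p\<in>S. card (C_class p))"
    using card_C_class assms(1,2) by (intro sum_mono) blast
  also have "\<dots> = card (\<Union>p\<in>S. C_class p)"
    by (rule card_UN_disjoint[symmetric]) (simp_all add: fin disj)
  also have "\<dots> \<le> card X"
    using assms(1,2) C_class_subset by (intro card_mono) auto
  finally show ?thesis .
qed

lemma B_neighbours_C_free:
  assumes "x \<in> X" and N: "N \<subseteq> {y \<in> X. y \<noteq> x \<and> col x y = B}"
    and "p \<in> insert x N" "q \<in> insert x N" "p \<noteq> q"
  shows "col p q \<noteq> C"
proof -
  have nbr: "\<And>y. y \<in> N \<Longrightarrow> y \<in> X \<and> y \<noteq> x \<and> col x y = B"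
    using N by blast
  consider "p = x" "q \<in> N" | "q = x" "p \<in> N" | "p \<in> N" "q \<in> N"
    using assms(3-5) by blast
  then show ?thesis
  proof cases
    case 1
    then show ?thesis using nbr by auto
  next
    case 2
    then show ?thesis using nbr col_sym[OF assms(1)] by fastforce
  next
    case 3
    then show ?thesis using nbr B_B_not_C[OF assms(1)] assms(5) by blast
  qed
qed

lemma four_B_neighbours:
  "\<exists>x\<in>X. \<exists>N. N \<subseteq> {y \<in> X. y \<noteq> x \<and> col x y = B} \<and> card N = 4"
proof -
  obtain x z where xz: "x \<in> X" "z \<in> X" "x \<noteq> z" "col x z = B"
    using B_edge_exists by blast
  obtain w1 where w1: "w1 \<in> X" "x \<noteq> w1" "w1 \<noteq> z" "col x w1 = B" "col w1 z = B"
    using B_edge_extension[OF xz, of B] by auto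
  obtain w2 where w2: "w2 \<in> X" "x \<noteq> w2" "w2 \<noteq> z" "col x w2 = B" "col w2 z = A"
    using B_edge_extension[OF xz, of A] by auto
  have "w1 \<noteq> w2" using w1(5) w2(5) by auto
  have z_w: "col z w1 = B" "col z w2 = A"
    using w1 w2 col_sym[OF xz(2)] by auto
  have w1_w2: "col w2 w1 = col w1 w2" "col w1 w2 \<noteq> C"
    using col_sym[OF w1(1) w2(1) \<open>w1 \<noteq> w2\<close>] B_B_not_C[OF xz(1) w1(1) w2(1)]
      w1 w2 \<open>w1 \<noteq> w2\<close> by auto
  \<comment> \<open>u is told apart from z and from one of w1, w2 by its colour towards the other one\<close>
  obtain u where u: "u \<in> X" "x \<noteq> u" "col x u = B" "u \<notin> {z, w1, w2}"
  proof (cases "col w1 w2")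
    case A
    obtain u where "u \<in> X" "u \<noteq> x" "u \<noteq> w2" "col x u = B" "col u w2 = B"
      using B_edge_extension[OF xz(1) w2(1,2,4), of B] by auto
    with A z_w show ?thesis by (intro that) auto
  next
    case B
    obtain u where "u \<in> X" "u \<noteq> x" "u \<noteq> w1" "col x u = B" "col u w1 = A"
      using B_edge_extension[OF xz(1) w1(1,2,4), of A] by auto
    with B z_w w1_w2(1) show ?thesis by (intro that) auto
  qed (use w1_w2 in simp)
  have "{z, w1, w2, u} \<subseteq> {y \<in> X. y \<noteq> x \<and> col x y = B}"
    using xz w1 w2 u by auto
  moreover have "card {z, w1, w2, u} = 4"
    using w1(3) w2(3) \<open>w1 \<noteq> w2\<close> u(4) by auto
  ultimately show ?thesis using xz(1) by blast
qed

lemma card_ge_15: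
  assumes "finite X"
  shows "15 \<le> card X"
proof -
  obtain x N where x: "x \<in> X" and N: "N \<subseteq> {y \<in> X. y \<noteq> x \<and> col x y = B}" "card N = 4"
    using four_B_neighbours by blast
  have "finite N" using N(2) card.infinite by fastforce
  moreover have "x \<notin> N" using N(1) by blast
  ultimately have five: "card (insert x N) = 5" using N(2) by simp
  have "3 * card (insert x N) \<le> card X"
    using assms x N(1) B_neighbours_C_free by (intro card_ge_3_times_C_free) auto
  then show ?thesis using five by simp
qed

end

theorem mainTheorem10:
  fixes X :: "'a set" and col :: "'a \<Rightarrow> 'a \<Rightarrow> color"
  assumes "is_rep_31_65 X col"
  shows "infinite X \<or> 15 \<le> card X"
  using rep_31_65.card_ge_15[OF rep_31_65.intro[OF assms]] by blast

end
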